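(* Let $\mathcal{G}=(\mathcal{P},\mathcal{L})$ be a Fischer space, let $R$ be a commutative ring with $2=0$ and let $A=M_R(\mathcal{G},1)$. For each point $x\in\mathcal{P}$, the operator $\operatorname{ad}_x\colon A\to A$, $v\mapsto xv$, is nilpotent; more precisely $\operatorname{ad}_x^2=0$.
   Context: A 3-transposition group is a pair $(G,D)$ where $D$ is a conjugacy class of involutions generating $G$ with $de$ of order at most $3$ for all $d,e\in D$. Its Fischer space $\mathcal{G}=(\mathcal{P},\mathcal{L})$ has $\mathcal{P}=D$ and as lines the $3$-subsets consisting of the three involutions of a subgroup isomorphic to $\mathrm{Sym}(3)$. Distinct points on a common line are collinear ($p\sim q$), and $p\wedge q$ is the third point of that line. The nilpotent Matsuo algebra $A=M_R(\mathcal{G},1)$ is the free $R$-module with basis $\mathcal{P}$ and commutative bilinear product $p\cdot q=0$ if $p=q$ or $p\not\sim q$, $p\cdot q=p+q+p\wedge q$ if $p\sim q$. *)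

theory Defs
  imports "HOL-Algebra.Sym_Groups" "HOL-Algebra.Generated_Groups" "HOL-Library.Function_Algebras"
begin

definition three_transposition_group :: "('g, 'b) monoid_scheme \<Rightarrow> 'g set \<Rightarrow> bool" where
  "three_transposition_group G D \<longleftrightarrow>
     group G \<and> D \<subseteq> carrier G \<and>
     (\<exists>d\<in>carrier G. D = {g \<otimes>\<^bsub>G\<^esub> d \<otimes>\<^bsub>G\<^esub> inv\<^bsub>G\<^esub> g | g. g \<in> carrier G}) \<and>
     (\<forall>d\<in>D. d \<noteq> \<one>\<^bsub>G\<^esub> \<and> d \<otimes>\<^bsub>G\<^esub> d = \<one>\<^bsub>G\<^esub>) \<and>
     generate G D = carrier G \<and>
     (\<forall>d\<in>D. \<forall>e\<in>D. \<exists>n::nat. 0 < n \<and> n \<le> 3 \<and> (d \<otimes>\<^bsub>G\<^esub> e) [^]\<^bsub>G\<^esub> n = \<one>\<^bsub>G\<^esub>)"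

definition fischer_line :: "('g, 'b) monoid_scheme \<Rightarrow> 'g set \<Rightarrow> 'g set \<Rightarrow> bool" where
  "fischer_line G D L \<longleftrightarrow> L \<subseteq> D \<and> card L = 3 \<and>
     (\<exists>H. subgroup H G \<and> (G\<lparr>carrier := H\<rparr>) \<cong> sym_group 3 \<and>
          L = {h \<in> H. h \<noteq> \<one>\<^bsub>G\<^esub> \<and> h \<otimes>\<^bsub>G\<^esub> h = \<one>\<^bsub>G\<^esub>})"

definition fischer_collinear :: "('g, 'b) monoid_scheme \<Rightarrow> 'g set \<Rightarrow> 'g \<Rightarrow> 'g \<Rightarrow> bool" where
  "fischer_collinear G D p q \<longleftrightarrow> p \<noteq> q \<and> (\<exists>L. fischer_line G D L \<and> p \<in> L \<and> q \<in> L)"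

definition fischer_wedge :: "('g, 'b) monoid_scheme \<Rightarrow> 'g set \<Rightarrow> 'g \<Rightarrow> 'g \<Rightarrow> 'g" where
  "fischer_wedge G D p q =
     (THE r. \<exists>L. fischer_line G D L \<and> L = {p, q, r} \<and> r \<noteq> p \<and> r \<noteq> q)"

text \<open>Elements of the free R-module with basis D: finitely supported functions D -> R.\<close>
definition matsuo_carrier :: "'g set \<Rightarrow> ('g \<Rightarrow> 'r::comm_ring_1) set" where
  "matsuo_carrier D = {v. finite {p. v p \<noteq> 0} \<and> {p. v p \<noteq> 0} \<subseteq> D}"

definition basis_vec :: "'g \<Rightarrow> ('g \<Rightarrow> 'r::comm_ring_1)" where
  "basis_vec p = (\<lambda>r. if r = p then 1 else 0)"

definition matsuo_basis_prod :: "('g, 'b) monoid_scheme \<Rightarrow> 'g set \<Rightarrow> 'g \<Rightarrow> 'g \<Rightarrow> ('g \<Rightarrow> 'r::comm_ring_1)" where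
  "matsuo_basis_prod G D p q =
     (if fischer_collinear G D p q
      then basis_vec p + basis_vec q + basis_vec (fischer_wedge G D p q)
      else 0)"

definition matsuo_mult :: "('g, 'b) monoid_scheme \<Rightarrow> 'g set \<Rightarrow> ('g \<Rightarrow> 'r::comm_ring_1) \<Rightarrow> ('g \<Rightarrow> 'r) \<Rightarrow> ('g \<Rightarrow> 'r)" where
  "matsuo_mult G D u v =
     (\<Sum>p\<in>{p. u p \<noteq> 0}. \<Sum>q\<in>{q. v q \<noteq> 0}. (\<lambda>r. u p * v q * matsuo_basis_prod G D p q r))"

definition matsuo_ad :: "('g, 'b) monoid_scheme \<Rightarrow> 'g set \<Rightarrow> 'g \<Rightarrow> ('g \<Rightarrow> 'r::comm_ring_1) \<Rightarrow> ('g \<Rightarrow> 'r)" where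
  "matsuo_ad G D x v = matsuo_mult G D (basis_vec x) v"

end

theory Submission
  imports Defs
begin

text \<open>
  If x is not collinear with q then xq = 0. Otherwise the line through x and q is
  {x, q, w} with w = x \<and> q, and x \<and> w = q, so xq = x + q + w = xw and
  x(xq) = xx + xq + xw = 2(x + q + w), which vanishes when 2 = 0. The only group
  theory needed is that a line is determined by two of its points: it is
  {a, b, aba}, because two distinct involutions of Sym(3) never commute
  (they would generate a Klein four-group, and 4 does not divide 6).
\<close>

lemma (in group) klein_four_subgroup:
  assumes a: "a \<in> carrier G" and b: "b \<in> carrier G"
    and aa: "a \<otimes> a = \<one>" and bb: "b \<otimes> b = \<one>" and ab: "a \<otimes> b = b \<otimes> a"
  shows "subgroup {\<one>, a, b, a \<otimes> b} G"
proof (rule subgroupI)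
  have abab: "(a \<otimes> b) \<otimes> (a \<otimes> b) = \<one>"
    by (metis a b aa bb ab m_assoc m_closed r_one)
  have "inv a = a" "inv b = b" "inv (a \<otimes> b) = a \<otimes> b"
    using a b aa bb abab by (simp_all add: inv_equality)
  then show "inv x \<in> {\<one>, a, b, a \<otimes> b}" if "x \<in> {\<one>, a, b, a \<otimes> b}" for x
    using that by auto
  have "a \<otimes> (a \<otimes> b) = b" "(a \<otimes> b) \<otimes> a = b" "b \<otimes> (a \<otimes> b) = a" "(a \<otimes> b) \<otimes> b = a"
    by (metis a b aa bb ab m_assoc l_one r_one)+
  then show "x \<otimes> y \<in> {\<one>, a, b, a \<otimes> b}"
    if "x \<in> {\<one>, a, b, a \<otimes> b}" "y \<in> {\<one>, a, b, a \<otimes> b}" for x y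
    using that a b by (elim insertE emptyE) (simp_all add: aa bb abab ab[symmetric])
qed (use a b in auto)

lemma (in group) commuting_involutions_eq:
  assumes H: "subgroup H G" and not_4_dvd: "\<not> 4 dvd card H"
    and a: "a \<in> H" "a \<noteq> \<one>" "a \<otimes> a = \<one>" and b: "b \<in> H" "b \<noteq> \<one>" "b \<otimes> b = \<one>"
    and ab: "a \<otimes> b = b \<otimes> a"
  shows "a = b"
proof (rule ccontr)
  assume ne: "a \<noteq> b"
  let ?K = "{\<one>, a, b, a \<otimes> b}"
  have ac: "a \<in> carrier G" and bc: "b \<in> carrier G"
    using a b H subgroup.subset by auto
  have "a \<otimes> b \<noteq> \<one>"
    using ne ac bc a(3) b(3) by (metis inv_equality)
  moreover have "a \<otimes> b \<noteq> a" "a \<otimes> b \<noteq> b"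
    using ac bc a(2) b(2) by simp_all
  ultimately have card_K: "card ?K = 4"
    using a(2) b(2) ne by auto
  interpret H: group "G\<lparr>carrier := H\<rparr>"
    using subgroup.subgroup_is_group[OF H is_group] .
  have "subgroup ?K (G\<lparr>carrier := H\<rparr>)"
    using a b H by (intro subgroup_incl klein_four_subgroup ac bc a(3) b(3) ab)
      (auto intro: subgroup.m_closed subgroup.one_closed)
  then have "card (rcosets\<^bsub>G\<lparr>carrier := H\<rparr>\<^esub> ?K) * card ?K = card H"
    using H.lagrange by (simp add: order_def)
  then show False
    using card_K not_4_dvd by (metis dvd_triv_right)
qed

lemma (in group) fischer_line_eq:
  assumes L: "fischer_line G D L" and "a \<in> L" "b \<in> L" "a \<noteq> b"
  shows "L = {a, b, a \<otimes> b \<otimes> a}" and "a \<otimes> b \<otimes> a \<noteq> a" and "a \<otimes> b \<otimes> a \<noteq> b"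
proof -
  obtain H where H: "subgroup H G" and iso: "G\<lparr>carrier := H\<rparr> \<cong> sym_group 3"
    and L_eq: "L = {h \<in> H. h \<noteq> \<one> \<and> h \<otimes> h = \<one>}" and card_L: "card L = 3"
    using L unfolding fischer_line_def by auto
  have "card H = 6"
    using iso_same_card[OF iso] sym_group_card_carrier[of 3] by (simp add: fact_numeral)
  have a: "a \<in> H" "a \<noteq> \<one>" "a \<otimes> a = \<one>" and b: "b \<in> H" "b \<noteq> \<one>" "b \<otimes> b = \<one>"
    using \<open>a \<in> L\<close> \<open>b \<in> L\<close> L_eq by auto
  have ac: "a \<in> carrier G" and bc: "b \<in> carrier G"
    using a b H subgroup.subset by auto
  define c where "c = a \<otimes> b \<otimes> a"
  have ca: "c \<otimes> a = a \<otimes> b"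
    unfolding c_def using ac bc a(3) by (simp add: m_assoc)
  have c_ne_one: "c \<noteq> \<one>"
    using ca ac bc b(2) by auto
  have c_ne_a: "c \<noteq> a"
  proof
    assume "c = a"
    then have "a \<otimes> a = a \<otimes> b"
      using ca by simp
    then show False
      using ac bc \<open>a \<noteq> b\<close> by simp
  qed
  have c_ne_b: "c \<noteq> b"
    using ca commuting_involutions_eq[OF H _ a b] \<open>card H = 6\<close> \<open>a \<noteq> b\<close> by auto
  have "c \<otimes> c = \<one>"
    unfolding c_def using ac bc a(3) b(3) by (metis m_assoc m_closed r_one)
  moreover have "c \<in> H"
    unfolding c_def using a b H by (auto intro: subgroup.m_closed)
  ultimately have "c \<in> L"
    using L_eq c_ne_one by auto
  have "finite L"
    using card_L card.infinite by fastforce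
  moreover have "{a, b, c} \<subseteq> L"
    using \<open>a \<in> L\<close> \<open>b \<in> L\<close> \<open>c \<in> L\<close> by simp
  moreover have "card {a, b, c} = card L"
    using card_L \<open>a \<noteq> b\<close> c_ne_a c_ne_b by simp
  ultimately have "{a, b, c} = L"
    by (rule card_subset_eq)
  with c_ne_a c_ne_b show "L = {a, b, a \<otimes> b \<otimes> a}" "a \<otimes> b \<otimes> a \<noteq> a" "a \<otimes> b \<otimes> a \<noteq> b"
    unfolding c_def by auto
qed

lemma (in group) fischer_wedge_eq:
  assumes "fischer_line G D L" and "L = {p, q, r}" and "p \<noteq> q" "r \<noteq> p" "r \<noteq> q"
  shows "fischer_wedge G D p q = r"
  unfolding fischer_wedge_def
proof (rule the_equality)
  show "\<exists>L. fischer_line G D L \<and> L = {p, q, r} \<and> r \<noteq> p \<and> r \<noteq> q"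
    using assms by blast
  have "r = p \<otimes> q \<otimes> p"
    using fischer_line_eq[OF assms(1), of p q] assms by auto
  then show "r' = r" if "\<exists>L. fischer_line G D L \<and> L = {p, q, r'} \<and> r' \<noteq> p \<and> r' \<noteq> q" for r'
    using that fischer_line_eq[of D _ p q] \<open>p \<noteq> q\<close> by fastforce
qed

lemma (in group) fischer_collinear_wedge:
  assumes "fischer_collinear G D p q"
  shows "fischer_wedge G D p q \<noteq> p" and "fischer_wedge G D p q \<noteq> q"
    and "fischer_collinear G D p (fischer_wedge G D p q)"
    and "fischer_wedge G D p (fischer_wedge G D p q) = q"
proof -
  obtain L where L: "fischer_line G D L" "p \<in> L" "q \<in> L" and "p \<noteq> q"
    using assms unfolding fischer_collinear_def by blast
  define r where "r = p \<otimes> q \<otimes> p"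
  have L_eq: "L = {p, q, r}" and "r \<noteq> p" "r \<noteq> q"
    using fischer_line_eq[OF L \<open>p \<noteq> q\<close>] unfolding r_def by auto
  then have "fischer_wedge G D p q = r" "fischer_wedge G D p r = q"
    using fischer_wedge_eq[OF L(1)] \<open>p \<noteq> q\<close> by auto
  moreover have "fischer_collinear G D p r"
    unfolding fischer_collinear_def using L L_eq \<open>r \<noteq> p\<close> by auto
  ultimately show "fischer_wedge G D p q \<noteq> p" "fischer_wedge G D p q \<noteq> q"
    "fischer_collinear G D p (fischer_wedge G D p q)" "fischer_wedge G D p (fischer_wedge G D p q) = q"
    using \<open>r \<noteq> p\<close> \<open>r \<noteq> q\<close> by simp_all
qed

lemma matsuo_basis_prod_self: "matsuo_basis_prod G D x x = 0"
  by (simp add: matsuo_basis_prod_def fischer_collinear_def)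

lemma matsuo_basis_prod_support:
  "{t. (matsuo_basis_prod G D x q :: 'g \<Rightarrow> 'r::comm_ring_1) t \<noteq> 0} \<subseteq> {x, q, fischer_wedge G D x q}"
  by (auto simp: matsuo_basis_prod_def basis_vec_def split: if_splits)

lemma (in group) matsuo_basis_prod_wedge:
  assumes "fischer_collinear G D x q"
  shows "matsuo_basis_prod G D x (fischer_wedge G D x q) = matsuo_basis_prod G D x q"
  using fischer_collinear_wedge[OF assms]
  by (simp add: matsuo_basis_prod_def assms)

lemma sum_fun_pointwise: "(\<Sum>i\<in>A. f i) = (\<lambda>x. \<Sum>i\<in>A. f i x)"
  by (induction A rule: infinite_finite_induct) (auto simp: fun_eq_iff)

lemma matsuo_ad_eq_sum:
  fixes u :: "'g \<Rightarrow> 'r::comm_ring_1"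
  assumes "finite S" and "{q. u q \<noteq> 0} \<subseteq> S"
  shows "matsuo_ad G D x u = (\<lambda>r. \<Sum>q\<in>S. u q * matsuo_basis_prod G D x q r)"
proof (cases "(1::'r) = 0")
  case True
  then have "a = 0" for a :: 'r
    by (metis mult_1 mult_zero_left)
  then show ?thesis
    by (intro ext) metis
next
  case False
  then have supp_x: "{p. (basis_vec x :: 'g \<Rightarrow> 'r) p \<noteq> 0} = {x}"
    by (auto simp: basis_vec_def)
  have "matsuo_ad G D x u = (\<lambda>r. \<Sum>q\<in>{q. u q \<noteq> 0}. u q * matsuo_basis_prod G D x q r)"
    unfolding matsuo_ad_def matsuo_mult_def supp_x by (simp add: basis_vec_def sum_fun_pointwise)
  also have "\<dots> = (\<lambda>r. \<Sum>q\<in>S. u q * matsuo_basis_prod G D x q r)"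
    using assms by (intro ext sum.mono_neutral_left) auto
  finally show ?thesis .
qed

lemma matsuo_ad_sum:
  fixes f :: "'i \<Rightarrow> 'g \<Rightarrow> 'r::comm_ring_1"
  assumes S: "finite S" and supp_f: "\<And>i. i \<in> S \<Longrightarrow> finite {t. f i t \<noteq> 0}"
  shows "matsuo_ad G D x (\<lambda>t. \<Sum>i\<in>S. c i * f i t) = (\<lambda>r. \<Sum>i\<in>S. c i * matsuo_ad G D x (f i) r)"
proof -
  define T where "T = (\<Union>i\<in>S. {t. f i t \<noteq> 0})"
  have T: "finite T"
    unfolding T_def using S supp_f by blast
  have supp: "{t. (\<Sum>i\<in>S. c i * f i t) \<noteq> 0} \<subseteq> T"
  proof
    fix t assume "t \<in> {t. (\<Sum>i\<in>S. c i * f i t) \<noteq> 0}"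
    then obtain i where "i \<in> S" "f i t \<noteq> 0"
      by (metis (mono_tags, lifting) mem_Collect_eq mult_zero_right sum.neutral)
    then show "t \<in> T"
      unfolding T_def by blast
  qed
  have "matsuo_ad G D x (\<lambda>t. \<Sum>i\<in>S. c i * f i t)
      = (\<lambda>r. \<Sum>t\<in>T. (\<Sum>i\<in>S. c i * f i t) * matsuo_basis_prod G D x t r)"
    by (rule matsuo_ad_eq_sum[OF T supp])
  also have "\<dots> = (\<lambda>r. \<Sum>i\<in>S. c i * (\<Sum>t\<in>T. f i t * matsuo_basis_prod G D x t r))"
    by (simp add: sum_distrib_left sum_distrib_right mult.assoc sum.swap[of _ T])
  also have "\<dots> = (\<lambda>r. \<Sum>i\<in>S. c i * matsuo_ad G D x (f i) r)"
  proof -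
    have "matsuo_ad G D x (f i) = (\<lambda>r. \<Sum>t\<in>T. f i t * matsuo_basis_prod G D x t r)"
      if "i \<in> S" for i
      using matsuo_ad_eq_sum[OF T, of "f i"] that unfolding T_def by blast
    then show ?thesis
      by simp
  qed
  finally show ?thesis .
qed

lemma (in group) matsuo_ad_basis_prod:
  assumes two: "(2::'r::comm_ring_1) = 0"
  shows "matsuo_ad G D x (matsuo_basis_prod G D x q :: 'a \<Rightarrow> 'r) = 0"
proof (cases "fischer_collinear G D x q")
  case False
  then show ?thesis
    using matsuo_ad_eq_sum[of "{}" "0 :: 'a \<Rightarrow> 'r" G D x]
    by (simp add: matsuo_basis_prod_def fun_eq_iff)
next
  case True
  define w where "w = fischer_wedge G D x q"
  have "x \<noteq> q" "w \<noteq> x" "w \<noteq> q"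
    using True fischer_collinear_wedge(1,2)[OF True] unfolding fischer_collinear_def w_def by auto
  have "matsuo_ad G D x (matsuo_basis_prod G D x q :: 'a \<Rightarrow> 'r)
      = (\<lambda>r. \<Sum>t\<in>{x, q, w}. matsuo_basis_prod G D x q t * matsuo_basis_prod G D x t r)"
    unfolding w_def by (rule matsuo_ad_eq_sum[OF _ matsuo_basis_prod_support]) simp
  also have "\<dots> = (\<lambda>r. \<Sum>t\<in>{x, q, w}. matsuo_basis_prod G D x t r)"
  proof -
    have "matsuo_basis_prod G D x q t = (1::'r)" if "t \<in> {x, q, w}" for t
      using that True \<open>x \<noteq> q\<close> \<open>w \<noteq> x\<close> \<open>w \<noteq> q\<close>
      unfolding matsuo_basis_prod_def basis_vec_def w_def by auto
    then show ?thesis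
      by simp
  qed
  also have "\<dots> = (\<lambda>r. 2 * matsuo_basis_prod G D x q r)"
  proof -
    have "matsuo_basis_prod G D x w r = (matsuo_basis_prod G D x q r :: 'r)" for r
      unfolding w_def by (simp add: matsuo_basis_prod_wedge[OF True])
    then show ?thesis
      using \<open>x \<noteq> q\<close> \<open>w \<noteq> x\<close> \<open>w \<noteq> q\<close> by (simp add: matsuo_basis_prod_self)
  qed
  finally show ?thesis
    using two by (simp add: fun_eq_iff)
qed

theorem proposition5p3:
  fixes G :: "('g, 'b) monoid_scheme" and D :: "'g set" and x :: 'g
  assumes "three_transposition_group G D"
    and "(2::'r::comm_ring_1) = 0"
    and "x \<in> D"
  shows "\<forall>v \<in> (matsuo_carrier D :: ('g \<Rightarrow> 'r) set).
           (matsuo_ad G D x ^^ 2) v = 0"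
proof
  fix v :: "'g \<Rightarrow> 'r" assume "v \<in> matsuo_carrier D"
  then have S: "finite {q. v q \<noteq> 0}"
    unfolding matsuo_carrier_def by simp
  interpret group G
    using assms(1) unfolding three_transposition_group_def by blast
  have "(matsuo_ad G D x ^^ 2) v
      = matsuo_ad G D x (\<lambda>r. \<Sum>q | v q \<noteq> 0. v q * matsuo_basis_prod G D x q r)"
    by (simp add: numeral_2_eq_2 matsuo_ad_eq_sum[OF S order_refl])
  also have "\<dots> = (\<lambda>r. \<Sum>q | v q \<noteq> 0. v q * matsuo_ad G D x (matsuo_basis_prod G D x q) r)"
    by (intro matsuo_ad_sum[OF S] finite_subset[OF matsuo_basis_prod_support]) simp
  also have "\<dots> = 0"
    using matsuo_ad_basis_prod[OF assms(2)] by (simp add: fun_eq_iff)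
  finally show "(matsuo_ad G D x ^^ 2) v = 0" .
qed

end
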